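(* Let $0<\alpha<1$. Let $P,Q$ be probability measures on $\mathbb{R}^d$, both absolutely continuous with respect to a probability measure $\mu$. Let $\mathbf{x}_1,\dots,\mathbf{x}_N\in\mathbb{R}^d$ with $q_i:=\frac{dQ}{d\mu}(\mathbf{x}_i)>0$ and $p_i:=\frac{dP}{d\mu}(\mathbf{x}_i)>0$ for $1\le i\le N$. For $L>0$ let $I_L^i=[-L-\log\frac{q_i}{p_i},\,L-\log\frac{q_i}{p_i}]$ and define $f^{(N)}:I_L^1\times\cdots\times I_L^N\to\mathbb{R}$ by $$f^{(N)}(\mathbf{t})=f^{(N)}(t_1,\dots,t_N)=\frac{1}{\alpha}\frac{1}{N}\sum_{i=1}^N e^{\alpha t_i}q_i+\frac{1}{1-\alpha}\frac{1}{N}\sum_{i=1}^N e^{(\alpha-1)t_i}p_i .$$ Let $\frac{\lambda}{2}=\frac{1}{N}\min_{1\le i\le N}\big\{e^{-L}q_i^{1-\alpha}p_i^{\alpha}\big\}$. Then for all $\mathbf{t}$ in the domain, $$\mathbf{t}^{T}\,\nabla^2 f^{(N)}(\mathbf{t})\,\mathbf{t}=\sum_{1\le i,j\le N}t_it_j\frac{\partial^2 f^{(N)}}{\partial t_i\partial t_j}(\mathbf{t})\ge\frac{\lambda}{2}\|\mathbf{t}\|^2 .$$ Moreover, with $D_i=2e^{L}q_i^{1-\alpha}p_i^{\alpha}$ and $D=\max\{D_1,\dots,D_N\}$, we have $\|\nabla f^{(N)}(\mathbf{t})\|^2\le D^2$ for all $\mathbf{t}\in I_L^1\times\cdots\times I_L^N$,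 and $f^{(N)}$ is minimized at $\mathbf{t}_*=(-\log\frac{q_1}{p_1},\dots,-\log\frac{q_N}{p_N})$.
   Context: $\|\cdot\|$ is the Euclidean norm; $\frac{dQ}{d\mu},\frac{dP}{d\mu}$ are Radon–Nikodým derivatives. *)

theory Defs
  imports "HOL-Probability.Probability"
begin

text \<open>The formula is taken as defined on all of R^N (it is smooth there); the paper's
  f^(N) is its restriction to the box I_L^1 x ... x I_L^N.\<close>
definition fN :: "real \<Rightarrow> ('n::finite \<Rightarrow> real) \<Rightarrow> ('n \<Rightarrow> real) \<Rightarrow> real^'n \<Rightarrow> real" where
  "fN \<alpha> q p t =
     (1/\<alpha>) * (1 / real CARD('n)) * (\<Sum>i\<in>UNIV. exp (\<alpha> * t$i) * q i)
   + (1/(1-\<alpha>)) * (1 / real CARD('n)) * (\<Sum>i\<in>UNIV. exp ((\<alpha> - 1) * t$i) * p i)"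

definition pderiv_at :: "'n::finite \<Rightarrow> (real^'n \<Rightarrow> real) \<Rightarrow> real^'n \<Rightarrow> real" where
  "pderiv_at i g t = deriv (\<lambda>s. g (\<chi> j. if j = i then s else t$j)) (t$i)"

definition grad :: "(real^'n::finite \<Rightarrow> real) \<Rightarrow> real^'n \<Rightarrow> real^'n" where
  "grad g t = (\<chi> i. pderiv_at i g t)"

definition hess_quad :: "(real^'n::finite \<Rightarrow> real) \<Rightarrow> real^'n \<Rightarrow> real" where
  "hess_quad g t = (\<Sum>i\<in>UNIV. \<Sum>j\<in>UNIV. t$i * t$j * pderiv_at i (pderiv_at j g) t)"

definition boxL :: "real \<Rightarrow> ('n::finite \<Rightarrow> real) \<Rightarrow> ('n \<Rightarrow> real) \<Rightarrow> (real^'n) set" where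
  "boxL L q p = {t. \<forall>i. - L - ln (q i / p i) \<le> t$i \<and> t$i \<le> L - ln (q i / p i)}"

end

theory Submission
  imports Defs
begin

text \<open>After the shift s_i = t_i + ln (q_i / p_i) the function f^(N) separates as
  sum_i (C_i / N) phi(s_i), with C_i = q_i^(1-alpha) p_i^alpha and
  phi(s) = alpha_phi alpha s = exp(alpha s)/alpha + exp((alpha-1) s)/(1-alpha). So the Hessian
  is diagonal with entries (C_i/N) (alpha exp(alpha s_i) + (1-alpha) exp((alpha-1) s_i)) and the
  gradient has entries (C_i/N) (exp(alpha s_i) - exp((alpha-1) s_i)). On the box |s_i| <= L, and as
  |alpha| and |alpha - 1| are at most 1, both exponentials lie in [exp(-L), exp L]: this bounds
  the curvature from below and, via ||v|| <= sum_i |v_i|, the gradient from above.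
  Finally exp x >= 1 + x shows that phi is minimal at s = 0, that is at t_*.\<close>

lemma pderiv_at_coordinate:
  fixes g :: "real \<Rightarrow> real"
  assumes "\<And>x. (g has_real_derivative g' x) (at x)"
  shows "pderiv_at i (\<lambda>t::real^'n::finite. g (t$j)) t = (if i = j then g' (t$i) else 0)"
  using assms by (cases "i = j") (simp_all add: pderiv_at_def DERIV_imp_deriv)

lemma pderiv_at_sum_coordinates:
  fixes h :: "'n::finite \<Rightarrow> real \<Rightarrow> real"
  assumes "\<And>k x. (h k has_real_derivative h' k x) (at x)"
  shows "pderiv_at i (\<lambda>t. \<Sum>k\<in>UNIV. h k (t$k)) t = h' i (t$i)"
proof -
  have "((\<lambda>s. h k ((\<chi> j. if j = i then s else t$j)$k))
      has_real_derivative (if k = i then h' i (t$i) else 0)) (at (t$i))" for k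
    using assms by (cases "k = i") auto
  then have "((\<lambda>s. \<Sum>k\<in>UNIV. h k ((\<chi> j. if j = i then s else t$j)$k))
      has_real_derivative (\<Sum>k\<in>UNIV. if k = i then h' i (t$i) else 0)) (at (t$i))"
    by (rule DERIV_sum)
  then show ?thesis
    by (simp add: pderiv_at_def DERIV_imp_deriv)
qed

lemma grad_sum_coordinates:
  fixes h :: "'n::finite \<Rightarrow> real \<Rightarrow> real"
  assumes "\<And>k x. (h k has_real_derivative h' k x) (at x)"
  shows "grad (\<lambda>t. \<Sum>k\<in>UNIV. h k (t$k)) t = (\<chi> i. h' i (t$i))"
  by (simp add: grad_def pderiv_at_sum_coordinates[OF assms])

lemma hess_quad_sum_coordinates:
  fixes h :: "'n::finite \<Rightarrow> real \<Rightarrow> real"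
  assumes "\<And>k x. (h k has_real_derivative h' k x) (at x)"
    and "\<And>k x. (h' k has_real_derivative h'' k x) (at x)"
  shows "hess_quad (\<lambda>t. \<Sum>k\<in>UNIV. h k (t$k)) t = (\<Sum>i\<in>UNIV. (t$i)\<^sup>2 * h'' i (t$i))"
proof -
  have second_partials: "pderiv_at i (pderiv_at j (\<lambda>t. \<Sum>k\<in>UNIV. h k (t$k))) t
      = (if i = j then h'' i (t$i) else 0)" for i j
  proof -
    have "pderiv_at j (\<lambda>t. \<Sum>k\<in>UNIV. h k (t$k)) = (\<lambda>t. h' j (t$j))"
      by (rule ext, rule pderiv_at_sum_coordinates[OF assms(1)])
    then show ?thesis
      by (simp add: pderiv_at_coordinate[OF assms(2)])
  qed
  show ?thesis
    by (simp add: hess_quad_def second_partials if_distrib power2_eq_square cong: if_cong)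
qed

definition alpha_phi :: "real \<Rightarrow> real \<Rightarrow> real" where
  "alpha_phi \<alpha> s = exp (\<alpha> * s) / \<alpha> + exp ((\<alpha> - 1) * s) / (1 - \<alpha>)"

lemma alpha_phi_has_real_derivative:
  fixes \<alpha> s :: real
  assumes "\<alpha> \<noteq> 0" "\<alpha> \<noteq> 1"
  shows "(alpha_phi \<alpha> has_real_derivative exp (\<alpha> * s) - exp ((\<alpha> - 1) * s)) (at s)"
proof -
  have "1 - \<alpha> \<noteq> 0"
    using assms by simp
  then have "(alpha_phi \<alpha> has_real_derivative
      exp (\<alpha> * s) * \<alpha> / \<alpha> + exp ((\<alpha> - 1) * s) * (\<alpha> - 1) / (1 - \<alpha>)) (at s)"
    unfolding alpha_phi_def[abs_def] by (auto intro!: derivative_eq_intros)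
  moreover have "exp (\<alpha> * s) * \<alpha> / \<alpha> + exp ((\<alpha> - 1) * s) * (\<alpha> - 1) / (1 - \<alpha>)
      = exp (\<alpha> * s) - exp ((\<alpha> - 1) * s)"
    using assms \<open>1 - \<alpha> \<noteq> 0\<close> by (simp add: field_simps)
  ultimately show ?thesis
    by simp
qed

lemma alpha_phi_deriv_has_real_derivative:
  fixes \<alpha> s :: real
  shows "((\<lambda>s. exp (\<alpha> * s) - exp ((\<alpha> - 1) * s)) has_real_derivative
     \<alpha> * exp (\<alpha> * s) + (1 - \<alpha>) * exp ((\<alpha> - 1) * s)) (at s)"
  by (auto intro!: derivative_eq_intros simp: algebra_simps)

lemma alpha_phi_ge_alpha_phi_0:
  fixes \<alpha> s :: real
  assumes "0 < \<alpha>" "\<alpha> < 1"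
  shows "alpha_phi \<alpha> 0 \<le> alpha_phi \<alpha> s"
proof -
  have "(1 + \<alpha> * s) / \<alpha> + (1 + (\<alpha> - 1) * s) / (1 - \<alpha>) = 1 / \<alpha> + 1 / (1 - \<alpha>)"
    using assms by (simp add: field_simps)
  moreover have "(1 + \<alpha> * s) / \<alpha> \<le> exp (\<alpha> * s) / \<alpha>"
    "(1 + (\<alpha> - 1) * s) / (1 - \<alpha>) \<le> exp ((\<alpha> - 1) * s) / (1 - \<alpha>)"
    using assms by (auto intro: divide_right_mono exp_ge_add_one_self)
  ultimately show ?thesis
    by (simp add: alpha_phi_def)
qed

lemma exp_mult_bounds:
  fixes a s L :: real
  assumes "\<bar>a\<bar> \<le> 1" "\<bar>s\<bar> \<le> L"
  shows "exp (- L) \<le> exp (a * s)" "exp (a * s) \<le> exp L"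
proof -
  have "\<bar>a\<bar> * \<bar>s\<bar> \<le> 1 * L"
    by (rule mult_mono) (use assms in auto)
  then have "- L \<le> a * s" "a * s \<le> L"
    by (simp_all add: abs_mult[symmetric] abs_le_iff)
  then show "exp (- L) \<le> exp (a * s)" "exp (a * s) \<le> exp L"
    by simp_all
qed

lemma alpha_phi_second_deriv_ge:
  fixes \<alpha> s L :: real
  assumes "0 \<le> \<alpha>" "\<alpha> \<le> 1" "\<bar>s\<bar> \<le> L"
  shows "exp (- L) \<le> \<alpha> * exp (\<alpha> * s) + (1 - \<alpha>) * exp ((\<alpha> - 1) * s)"
proof -
  have "\<alpha> * exp (- L) + (1 - \<alpha>) * exp (- L)
      \<le> \<alpha> * exp (\<alpha> * s) + (1 - \<alpha>) * exp ((\<alpha> - 1) * s)"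
    using assms by (intro add_mono mult_left_mono exp_mult_bounds) auto
  then show ?thesis
    by (simp add: algebra_simps)
qed

lemma alpha_phi_deriv_abs_le:
  fixes \<alpha> s L :: real
  assumes "0 \<le> \<alpha>" "\<alpha> \<le> 1" "\<bar>s\<bar> \<le> L"
  shows "\<bar>exp (\<alpha> * s) - exp ((\<alpha> - 1) * s)\<bar> \<le> exp L"
proof -
  have "exp (\<alpha> * s) \<le> exp L" "exp ((\<alpha> - 1) * s) \<le> exp L"
    using assms exp_mult_bounds(2)[of \<alpha> s L] exp_mult_bounds(2)[of "\<alpha> - 1" s L] by simp_all
  then show ?thesis
    using exp_gt_zero[of "\<alpha> * s"] exp_gt_zero[of "(\<alpha> - 1) * s"] by linarith
qed

lemma powr_mult_exp_shift:
  fixes q p x \<alpha> \<beta> :: real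
  assumes "0 < q" "0 < p"
  shows "q powr (1 - \<alpha>) * p powr \<alpha> * exp (\<beta> * (x + ln (q / p)))
    = exp (\<beta> * x) * q powr (1 - \<alpha> + \<beta>) * p powr (\<alpha> - \<beta>)"
  using assms by (simp add: powr_def ln_div exp_add[symmetric] algebra_simps)

lemma fN_eq_sum_alpha_phi:
  fixes q p :: "'n::finite \<Rightarrow> real"
  assumes "\<And>i. 0 < q i" "\<And>i. 0 < p i"
  shows "fN \<alpha> q p t = (\<Sum>i\<in>UNIV. q i powr (1 - \<alpha>) * p i powr \<alpha> / real CARD('n)
    * alpha_phi \<alpha> (t$i + ln (q i / p i)))"
proof -
  have "q i powr (1 - \<alpha>) * p i powr \<alpha> / real CARD('n) * alpha_phi \<alpha> (t$i + ln (q i / p i))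
      = 1 / \<alpha> * (1 / real CARD('n)) * (exp (\<alpha> * t$i) * q i)
      + 1 / (1 - \<alpha>) * (1 / real CARD('n)) * (exp ((\<alpha> - 1) * t$i) * p i)" for i
  proof -
    let ?C = "q i powr (1 - \<alpha>) * p i powr \<alpha>" and ?s = "t$i + ln (q i / p i)"
    have "?C * exp (\<alpha> * ?s) = exp (\<alpha> * t$i) * q i"
      using powr_mult_exp_shift[OF assms(1,2)[of i], where \<alpha>=\<alpha> and \<beta>=\<alpha> and x="t$i"]
        assms(1,2)[of i] by (simp add: powr_one)
    moreover have "?C * exp ((\<alpha> - 1) * ?s) = exp ((\<alpha> - 1) * t$i) * p i"
      using powr_mult_exp_shift[OF assms(1,2)[of i], where \<alpha>=\<alpha> and \<beta>="\<alpha> - 1" and x="t$i"]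
        assms(1,2)[of i] by (simp add: powr_one)
    moreover have "?C / real CARD('n) * alpha_phi \<alpha> ?s
        = 1 / \<alpha> * (1 / real CARD('n)) * (?C * exp (\<alpha> * ?s))
        + 1 / (1 - \<alpha>) * (1 / real CARD('n)) * (?C * exp ((\<alpha> - 1) * ?s))"
      by (simp add: alpha_phi_def divide_inverse algebra_simps)
    ultimately show ?thesis
      by simp
  qed
  then show ?thesis
    by (simp add: fN_def sum.distrib sum_distrib_left)
qed

lemma grad_fN:
  fixes q p :: "'n::finite \<Rightarrow> real"
  assumes "\<alpha> \<noteq> 0" "\<alpha> \<noteq> 1" "\<And>i. 0 < q i" "\<And>i. 0 < p i"
  defines "c i \<equiv> q i powr (1 - \<alpha>) * p i powr \<alpha> / real CARD('n)"
    and "s t i \<equiv> t$i + ln (q i / p i)"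
  shows "grad (fN \<alpha> q p) t = (\<chi> i. c i * (exp (\<alpha> * s t i) - exp ((\<alpha> - 1) * s t i)))"
proof -
  let ?h = "\<lambda>i x. c i * alpha_phi \<alpha> (x + ln (q i / p i))"
  let ?h' = "\<lambda>i x. c i * (exp (\<alpha> * (x + ln (q i / p i))) - exp ((\<alpha> - 1) * (x + ln (q i / p i))))"
  have "fN \<alpha> q p = (\<lambda>t. \<Sum>i\<in>UNIV. ?h i (t$i))"
    by (rule ext) (simp only: fN_eq_sum_alpha_phi[OF assms(3,4)] c_def)
  moreover have "(?h i has_real_derivative ?h' i x) (at x)" for i x
    using alpha_phi_has_real_derivative[OF assms(1,2), of "x + ln (q i / p i)"]
    by (intro DERIV_cmult) (simp add: DERIV_shift)
  ultimately show ?thesis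
    unfolding s_def using grad_sum_coordinates[of ?h ?h'] by simp
qed

lemma hess_quad_fN:
  fixes q p :: "'n::finite \<Rightarrow> real"
  assumes "\<alpha> \<noteq> 0" "\<alpha> \<noteq> 1" "\<And>i. 0 < q i" "\<And>i. 0 < p i"
  defines "c i \<equiv> q i powr (1 - \<alpha>) * p i powr \<alpha> / real CARD('n)"
    and "s t i \<equiv> t$i + ln (q i / p i)"
  shows "hess_quad (fN \<alpha> q p) t = (\<Sum>i\<in>UNIV. (t$i)\<^sup>2 *
    (c i * (\<alpha> * exp (\<alpha> * s t i) + (1 - \<alpha>) * exp ((\<alpha> - 1) * s t i))))"
proof -
  let ?h = "\<lambda>i x. c i * alpha_phi \<alpha> (x + ln (q i / p i))"
  let ?h' = "\<lambda>i x. c i * (exp (\<alpha> * (x + ln (q i / p i))) - exp ((\<alpha> - 1) * (x + ln (q i / p i))))"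
  let ?h'' = "\<lambda>i x. c i * (\<alpha> * exp (\<alpha> * (x + ln (q i / p i)))
    + (1 - \<alpha>) * exp ((\<alpha> - 1) * (x + ln (q i / p i))))"
  have "fN \<alpha> q p = (\<lambda>t. \<Sum>i\<in>UNIV. ?h i (t$i))"
    by (rule ext) (simp only: fN_eq_sum_alpha_phi[OF assms(3,4)] c_def)
  moreover have "(?h i has_real_derivative ?h' i x) (at x)" for i x
    using alpha_phi_has_real_derivative[OF assms(1,2), of "x + ln (q i / p i)"]
    by (intro DERIV_cmult) (simp add: DERIV_shift)
  moreover have "(?h' i has_real_derivative ?h'' i x) (at x)" for i x
    using alpha_phi_deriv_has_real_derivative[of \<alpha> "x + ln (q i / p i)"]
    by (intro DERIV_cmult) (simp add: DERIV_shift)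
  ultimately show ?thesis
    unfolding s_def using hess_quad_sum_coordinates[of ?h ?h' ?h''] by simp
qed

lemma abs_shift_le_if_in_boxL:
  assumes "t \<in> boxL L q p"
  shows "\<bar>t$i + ln (q i / p i)\<bar> \<le> L"
proof -
  have "- L - ln (q i / p i) \<le> t$i" "t$i \<le> L - ln (q i / p i)"
    using assms by (simp_all add: boxL_def)
  then show ?thesis
    unfolding abs_le_iff by linarith
qed

lemma hess_quad_fN_ge:
  fixes \<alpha> L :: real and q p :: "'n::finite \<Rightarrow> real"
  assumes "0 < \<alpha>" "\<alpha> < 1" "\<And>i. 0 < q i" "\<And>i. 0 < p i" "t \<in> boxL L q p"
  shows "1 / real CARD('n) * Min (range (\<lambda>i. exp (- L) * q i powr (1 - \<alpha>) * p i powr \<alpha>)) * (norm t)\<^sup>2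
    \<le> hess_quad (fN \<alpha> q p) t"
proof -
  have alpha_ne: "\<alpha> \<noteq> 0" "\<alpha> \<noteq> 1"
    using assms(1,2) by simp_all
  let ?N = "real CARD('n)" and ?C = "\<lambda>i. q i powr (1 - \<alpha>) * p i powr \<alpha>"
  let ?m = "Min (range (\<lambda>i. exp (- L) * q i powr (1 - \<alpha>) * p i powr \<alpha>))"
  have curvature: "1 / ?N * ?m \<le> ?C i / ?N * (\<alpha> * exp (\<alpha> * (t$i + ln (q i / p i)))
      + (1 - \<alpha>) * exp ((\<alpha> - 1) * (t$i + ln (q i / p i))))" for i
  proof -
    have "?m \<le> exp (- L) * ?C i"
      by (simp add: mult.assoc)
    also have "\<dots> \<le> ?C i * (\<alpha> * exp (\<alpha> * (t$i + ln (q i / p i)))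
        + (1 - \<alpha>) * exp ((\<alpha> - 1) * (t$i + ln (q i / p i))))"
      using alpha_phi_second_deriv_ge[of \<alpha> "t$i + ln (q i / p i)" L]
        abs_shift_le_if_in_boxL[OF assms(5)] assms(1,2)
      by (subst mult.commute) (intro mult_left_mono; simp)
    finally show ?thesis
      by (simp add: divide_right_mono)
  qed
  have "(norm t)\<^sup>2 = (\<Sum>i\<in>UNIV. (t$i)\<^sup>2)"
    unfolding power2_norm_eq_inner inner_vec_def by (simp add: power2_eq_square)
  then have "1 / ?N * ?m * (norm t)\<^sup>2 = (\<Sum>i\<in>UNIV. (t$i)\<^sup>2 * (1 / ?N * ?m))"
    by (simp only: sum_distrib_right mult.commute)
  also have "\<dots> \<le> hess_quad (fN \<alpha> q p) t"
    using assms(1,2) unfolding hess_quad_fN[OF alpha_ne assms(3,4)]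
    by (intro sum_mono mult_left_mono curvature) simp_all
  finally show ?thesis .
qed

lemma norm_grad_fN_le:
  fixes \<alpha> L :: real and q p :: "'n::finite \<Rightarrow> real"
  assumes "0 < \<alpha>" "\<alpha> < 1" "\<And>i. 0 < q i" "\<And>i. 0 < p i" "t \<in> boxL L q p"
  shows "(norm (grad (fN \<alpha> q p) t))\<^sup>2 \<le> (Max (range (\<lambda>i. 2 * exp L * q i powr (1 - \<alpha>) * p i powr \<alpha>)))\<^sup>2"
proof -
  have alpha_ne: "\<alpha> \<noteq> 0" "\<alpha> \<noteq> 1"
    using assms(1,2) by simp_all
  let ?N = "real CARD('n)" and ?C = "\<lambda>i. q i powr (1 - \<alpha>) * p i powr \<alpha>"
  let ?D = "Max (range (\<lambda>i. 2 * exp L * q i powr (1 - \<alpha>) * p i powr \<alpha>))"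
  have component: "\<bar>?C i / ?N * (exp (\<alpha> * (t$i + ln (q i / p i)))
      - exp ((\<alpha> - 1) * (t$i + ln (q i / p i))))\<bar> \<le> ?D / ?N" for i
  proof -
    have C_pos: "0 < ?C i"
      using assms(3,4)[of i] by simp
    let ?d = "exp (\<alpha> * (t$i + ln (q i / p i))) - exp ((\<alpha> - 1) * (t$i + ln (q i / p i)))"
    have "\<bar>?C i / ?N * ?d\<bar> = ?C i / ?N * \<bar>?d\<bar>"
      using C_pos by (simp add: abs_mult)
    also have "\<dots> \<le> ?C i / ?N * exp L"
      using alpha_phi_deriv_abs_le[of \<alpha> "t$i + ln (q i / p i)" L]
        abs_shift_le_if_in_boxL[OF assms(5)] assms(1,2) C_pos
      by (intro mult_left_mono) simp_all
    also have "\<dots> \<le> 2 * exp L * ?C i / ?N"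
      using C_pos by (simp add: divide_right_mono)
    also have "\<dots> \<le> ?D / ?N"
      by (intro divide_right_mono) (simp_all add: mult.assoc)
    finally show ?thesis .
  qed
  have "norm (grad (fN \<alpha> q p) t) \<le> (\<Sum>i\<in>UNIV. \<bar>grad (fN \<alpha> q p) t $ i\<bar>)"
    by (rule norm_le_l1_cart)
  also have "\<dots> \<le> (\<Sum>i\<in>(UNIV::'n set). ?D / ?N)"
    unfolding grad_fN[OF alpha_ne assms(3,4)] by (intro sum_mono) (simp only: vec_lambda_beta component)
  also have "\<dots> = ?D"
    by simp
  finally show ?thesis
    by (intro power_mono) simp_all
qed

lemma tstar_in_boxL:
  fixes L :: real
  assumes "0 \<le> L"
  shows "(\<chi> i. - ln (q i / p i)) \<in> boxL L q p"
  using assms by (simp add: boxL_def)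

lemma fN_tstar_le:
  fixes \<alpha> :: real and q p :: "'n::finite \<Rightarrow> real"
  assumes "0 < \<alpha>" "\<alpha> < 1" "\<And>i. 0 < q i" "\<And>i. 0 < p i"
  shows "fN \<alpha> q p (\<chi> i. - ln (q i / p i)) \<le> fN \<alpha> q p t"
  unfolding fN_eq_sum_alpha_phi[OF assms(3,4)]
  using assms alpha_phi_ge_alpha_phi_0[OF assms(1,2)]
  by (auto intro!: sum_mono divide_right_mono mult_left_mono)

theorem corollary1:
  fixes \<alpha> L :: real
    and \<mu> P Q :: "'d::euclidean_space measure"
    and x :: "'n::finite \<Rightarrow> 'd"
  assumes "0 < \<alpha>" "\<alpha> < 1"
    and "prob_space \<mu>" "prob_space P" "prob_space Q"
    and "sets \<mu> = sets borel" "sets P = sets borel" "sets Q = sets borel"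
    and "absolutely_continuous \<mu> P" "absolutely_continuous \<mu> Q"
    and "\<forall>i. enn2real (RN_deriv \<mu> Q (x i)) > 0"
    and "\<forall>i. enn2real (RN_deriv \<mu> P (x i)) > 0"
    and "L > 0"
  shows
    "let q = (\<lambda>i. enn2real (RN_deriv \<mu> Q (x i)));
         p = (\<lambda>i. enn2real (RN_deriv \<mu> P (x i)));
         N = real CARD('n);
         f = fN \<alpha> q p;
         half_lambda = (1 / N) * Min (range (\<lambda>i. exp (- L) * q i powr (1 - \<alpha>) * p i powr \<alpha>));
         D = Max (range (\<lambda>i. 2 * exp L * q i powr (1 - \<alpha>) * p i powr \<alpha>));
         tstar = (\<chi> i. - ln (q i / p i))
     in (\<forall>t\<in>boxL L q p. hess_quad f t \<ge> half_lambda * (norm t)\<^sup>2)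
      \<and> (\<forall>t\<in>boxL L q p. (norm (grad f t))\<^sup>2 \<le> D\<^sup>2)
      \<and> tstar \<in> boxL L q p \<and> (\<forall>t\<in>boxL L q p. f tstar \<le> f t)"
  using assms(1,2,11-13)
  unfolding Let_def
  by (intro conjI ballI hess_quad_fN_ge norm_grad_fN_le tstar_in_boxL fN_tstar_le) auto

end
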